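(* If $G$ is a finitely generated profinite group and $H<G$ is a subgroup of finite index, then every epimorphism $\alpha: G\to H$ has finite kernel; in particular, if $G$ has no non-trivial finite normal subgroup then $\alpha$ is injective.
   Context: Finitely generated means topologically finitely generated. Epimorphism means a surjective (continuous) homomorphism. *)

theory Defs
  imports "HOL-Analysis.Analysis" "HOL-Algebra.Algebra"
begin

definition topological_group :: "('a, 'm) monoid_scheme \<Rightarrow> 'a topology \<Rightarrow> bool" where
  "topological_group G T \<longleftrightarrow> group G \<and> topspace T = carrier G
     \<and> continuous_map (prod_topology T T) T (\<lambda>(x, y). x \<otimes>\<^bsub>G\<^esub> y)
     \<and> continuous_map T T (\<lambda>x. inv\<^bsub>G\<^esub> x)"

definition totally_disconnected_space :: "'a topology \<Rightarrow> bool" where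
  "totally_disconnected_space T \<longleftrightarrow>
     (\<forall>x \<in> topspace T. connected_component_of_set T x = {x})"

definition profinite_group :: "('a, 'm) monoid_scheme \<Rightarrow> 'a topology \<Rightarrow> bool" where
  "profinite_group G T \<longleftrightarrow> topological_group G T \<and> compact_space T
     \<and> Hausdorff_space T \<and> totally_disconnected_space T"

definition topologically_fg :: "('a, 'm) monoid_scheme \<Rightarrow> 'a topology \<Rightarrow> bool" where
  "topologically_fg G T \<longleftrightarrow>
     (\<exists>S. finite S \<and> S \<subseteq> carrier G \<and> T closure_of (generate G S) = carrier G)"

end

(*
  An open subgroup of a compact group has finite index, and a group topologically generated by a
  finite set S has only finitely many open subgroups of index at most n: an open subgroup is the
  closure of its trace on the dense subgroup generated by S, and by Schreier's argument that trace
  is determined by its intersection with a finite set of short words in S.  Hence the intersection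
  N_n of all open normal subgroups of index at most n is again open, and every continuous
  endomorphism f maps N_n into itself, because taking preimages under f preserves that family.

  Open normal subgroups separate the points of a profinite group, so given finitely many
  elements of the kernel of f we can choose n so large that N = N_n separates them.  The map N g |-> N f(g) is well defined on G/N and maps it onto H N/N, and each of its
  fibres contains the pairwise distinct cosets N k g with k among the chosen elements.  Since
  |G/N| <= |H N/N| [G:H], there are at most [G:H] of them.  So the kernel is finite, and being
  normal it is trivial when G has no non-trivial finite normal subgroup.
*)
theory Submission
  imports Defs
begin

section \<open>Counting cosets\<close>

lemma image_factor_finite_card_le:
  assumes "finite (g ` A)" and "\<And>x y. x \<in> A \<Longrightarrow> y \<in> A \<Longrightarrow> g x = g y \<Longrightarrow> f x = f y"
  shows "finite (f ` A)" and "card (f ` A) \<le> card (g ` A)"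
proof -
  have "f x = f (inv_into A g (g x))" if "x \<in> A" for x
    using assms(2)[OF that inv_into_into[of "g x" g A]] that by (simp add: f_inv_into_f)
  then have "f ` A = (\<lambda>b. f (inv_into A g b)) ` (g ` A)"
    by (simp add: image_image cong: image_cong)
  then show "finite (f ` A)" "card (f ` A) \<le> card (g ` A)"
    using assms(1) by (simp_all add: card_image_le)
qed

context group
begin

lemma rcos_eq_iff:
  assumes "subgroup H G" "x \<in> carrier G" "y \<in> carrier G"
  shows "H #> x = H #> y \<longleftrightarrow> x \<otimes> inv y \<in> H"
proof
  assume "H #> x = H #> y"
  then have "x \<in> H #> y"
    using rcos_self[OF assms(2,1)] by simp
  then show "x \<otimes> inv y \<in> H"
    using subgroup.rcos_module_imp[OF assms(1) is_group assms(3)] by blast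
next
  assume "x \<otimes> inv y \<in> H"
  then have "x \<in> H #> y"
    using subgroup.rcos_module_rev[OF assms(1) is_group assms(3,2)] by blast
  then show "H #> x = H #> y"
    using repr_independence[OF _ assms(3,1)] by simp
qed

lemma rcosets_eq_image: "rcosets H = (\<lambda>x. H #> x) ` carrier G"
  unfolding RCOSETS_def by blast

lemma subgroup_vimage:
  assumes f: "group_hom G G f" and U: "subgroup U G"
  shows "subgroup {x \<in> carrier G. f x \<in> U} G"
proof (rule subgroupI)
  show "{x \<in> carrier G. f x \<in> U} \<noteq> {}"
    using group_hom.hom_one[OF f] subgroup.one_closed[OF U] by auto
  show "inv a \<in> {x \<in> carrier G. f x \<in> U}" if "a \<in> {x \<in> carrier G. f x \<in> U}" for a
    using that group_hom.hom_inv[OF f] subgroup.m_inv_closed[OF U] by auto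
  show "a \<otimes> b \<in> {x \<in> carrier G. f x \<in> U}"
    if "a \<in> {x \<in> carrier G. f x \<in> U}" "b \<in> {x \<in> carrier G. f x \<in> U}" for a b
    using that group_hom.hom_mult[OF f] subgroup.m_closed[OF U] by auto
qed auto

lemma card_rcosets_vimage_le:
  assumes f: "group_hom G G f" and U: "subgroup U G" "finite (rcosets U)"
  shows "finite (rcosets {x \<in> carrier G. f x \<in> U})"
    and "card (rcosets {x \<in> carrier G. f x \<in> U}) \<le> card (rcosets U)"
proof -
  let ?P = "{x \<in> carrier G. f x \<in> U}"
  have fc: "f x \<in> carrier G" if "x \<in> carrier G" for x
    by (rule group_hom.hom_closed[OF f that])
  have sub: "(\<lambda>x. U #> f x) ` carrier G \<subseteq> rcosets U"
    by (rule image_subsetI) (simp add: fc rcosetsI subgroup.subset[OF U(1)])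
  then have fin: "finite ((\<lambda>x. U #> f x) ` carrier G)"
    using U(2) finite_subset by blast
  have fib: "?P #> x = ?P #> y"
    if "x \<in> carrier G" "y \<in> carrier G" "U #> f x = U #> f y" for x y
  proof -
    have "f (x \<otimes> inv y) = f x \<otimes> inv (f y)"
      using that group_hom.hom_mult[OF f] group_hom.hom_inv[OF f] by simp
    moreover have "f x \<otimes> inv (f y) \<in> U"
      using that(3) rcos_eq_iff[OF U(1) fc[OF that(1)] fc[OF that(2)]] by blast
    ultimately have "x \<otimes> inv y \<in> ?P"
      using that(1,2) by simp
    then show ?thesis
      using rcos_eq_iff[OF subgroup_vimage[OF f U(1)] that(1,2)] by blast
  qed
  note P = image_factor_finite_card_le[OF fin fib]
  show "finite (rcosets ?P)"
    unfolding rcosets_eq_image[of ?P] by (rule P(1))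
  have "card ((\<lambda>x. U #> f x) ` carrier G) \<le> card (rcosets U)"
    using sub U(2) by (rule card_mono[rotated])
  with P(2) show "card (rcosets ?P) \<le> card (rcosets U)"
    unfolding rcosets_eq_image[of ?P] by (rule le_trans)
qed

lemma card_rcosets_le_mult_index:
  assumes N: "subgroup N G" "finite (rcosets N)" and H: "subgroup H G" "finite (rcosets H)"
  shows "card (rcosets N) \<le> card ((\<lambda>h. N #> h) ` H) * card (rcosets H)"
proof -
  define rep where "rep c = (SOME r. r \<in> c)" for c :: "'a set"
  let ?Im = "(\<lambda>h. N #> h) ` H"
  have "rcosets N \<subseteq> (\<lambda>(y, c). y #> rep c) ` (?Im \<times> rcosets H)"
  proof
    fix q assume "q \<in> rcosets N"
    then obtain g where g: "g \<in> carrier G" "q = N #> g"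
      unfolding rcosets_eq_image by blast
    have c: "H #> g \<in> rcosets H"
      by (rule rcosetsI[OF subgroup.subset[OF H(1)] g(1)])
    have "rep (H #> g) \<in> H #> g"
      unfolding rep_def using rcos_self[OF g(1) H(1)] by (rule someI)
    then obtain h where h: "h \<in> H" "rep (H #> g) = h \<otimes> g"
      unfolding r_coset_def by blast
    have hc: "h \<in> carrier G"
      using h(1) subgroup.mem_carrier[OF H(1)] by blast
    have "q = (N #> inv h) #> rep (H #> g)"
      using g h(2) hc subgroup.subset[OF N(1)]
      by (simp add: coset_mult_assoc m_assoc[symmetric])
    moreover have "N #> inv h \<in> ?Im"
      using h(1) subgroup.m_inv_closed[OF H(1)] by blast
    ultimately show "q \<in> (\<lambda>(y, c). y #> rep c) ` (?Im \<times> rcosets H)"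
      using c by force
  qed
  moreover have "finite ?Im"
    using N(2) rcosetsI[OF subgroup.subset[OF N(1)]] subgroup.subset[OF H(1)]
    by (blast intro: finite_subset)
  ultimately have "card (rcosets N) \<le> card ((\<lambda>(y, c). y #> rep c) ` (?Im \<times> rcosets H))"
    using H(2) by (intro card_mono) auto
  also have "\<dots> \<le> card (?Im \<times> rcosets H)"
    using \<open>finite ?Im\<close> H(2) by (intro card_image_le) simp
  finally show ?thesis
    by (simp add: card_cartesian_product)
qed

lemma rcos_eq_imp_image_rcos_eq:
  assumes f: "group_hom G G f" and N: "subgroup N G" "f ` N \<subseteq> N"
    and x: "x \<in> carrier G" and y: "y \<in> carrier G" and eq: "N #> x = N #> y"
  shows "N #> f x = N #> f y"
proof -
  have "f (x \<otimes> inv y) \<in> N"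
    using eq N rcos_eq_iff[OF N(1) x y] by blast
  then show ?thesis
    using x y rcos_eq_iff[OF N(1)] group_hom.hom_closed[OF f]
    by (simp add: group_hom.hom_mult[OF f] group_hom.hom_inv[OF f])
qed

lemma card_mult_card_image_le:
  assumes f: "group_hom G G f" and N: "subgroup N G" "finite (rcosets N)" "f ` N \<subseteq> N"
    and F: "F \<subseteq> carrier G" "\<And>k. k \<in> F \<Longrightarrow> f k = \<one>" "inj_on (\<lambda>k. N #> k) F"
  shows "card F * card ((\<lambda>x. N #> f x) ` carrier G) \<le> card (rcosets N)"
proof -
  let ?Im = "(\<lambda>x. N #> f x) ` carrier G"
  define s where "s y = (SOME x. x \<in> carrier G \<and> N #> f x = y)" for y
  have s: "s y \<in> carrier G \<and> N #> f (s y) = y" if y: "y \<in> ?Im" for y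
  proof -
    obtain x where x: "y = N #> f x" "x \<in> carrier G"
      using y by (rule imageE)
    show ?thesis
      unfolding s_def by (rule someI[where x = x]) (simp add: x)
  qed
  define \<Psi> where "\<Psi> = (\<lambda>(k, y). N #> (k \<otimes> s y))"
  have "\<Psi> ` (F \<times> ?Im) \<subseteq> rcosets N"
    unfolding \<Psi>_def using F(1) s rcosetsI[OF subgroup.subset[OF N(1)]] by auto
  moreover have inj: "inj_on \<Psi> (F \<times> ?Im)"
  proof (rule inj_onI)
    fix p p' assume "p \<in> F \<times> ?Im" "p' \<in> F \<times> ?Im" "\<Psi> p = \<Psi> p'"
    then obtain k y k' y' where pk: "p = (k, y)" "p' = (k', y')" and k: "k \<in> F" "k' \<in> F"
      and y: "y \<in> ?Im" "y' \<in> ?Im" and eq: "N #> (k \<otimes> s y) = N #> (k' \<otimes> s y')"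
      unfolding \<Psi>_def by auto
    have kc: "k \<in> carrier G" "k' \<in> carrier G"
      using k F(1) by auto
    have g: "s y \<in> carrier G" "s y' \<in> carrier G"
      using s y by auto
    from eq have "N #> f (k \<otimes> s y) = N #> f (k' \<otimes> s y')"
      using rcos_eq_imp_image_rcos_eq[OF f N(1,3)] kc g by simp
    then have "y = y'"
      using s y kc g F(2) k by (simp add: group_hom.hom_mult[OF f] group_hom.hom_closed[OF f])
    with eq have "(k \<otimes> s y) \<otimes> inv (k' \<otimes> s y) \<in> N"
      using rcos_eq_iff[OF N(1)] kc g by simp
    moreover have "(k \<otimes> s y) \<otimes> inv (k' \<otimes> s y) = k \<otimes> inv k'"
      using kc g by (simp add: inv_mult_group m_assoc[symmetric]) (simp add: m_assoc)
    ultimately have "N #> k = N #> k'"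
      using rcos_eq_iff[OF N(1)] kc by simp
    then show "p = p'"
      using F(3) k pk \<open>y = y'\<close> by (simp add: inj_on_eq_iff)
  qed
  ultimately have "card (F \<times> ?Im) \<le> card (rcosets N)"
    using card_inj_on_le[OF inj _ N(2)] by blast
  then show ?thesis
    by (simp add: card_cartesian_product)
qed

lemma card_le_index_of_kernel_subset:
  assumes f: "group_hom G G f" "f ` carrier G = H" and H: "subgroup H G" "finite (rcosets H)"
    and N: "subgroup N G" "finite (rcosets N)" "f ` N \<subseteq> N"
    and F: "F \<subseteq> carrier G" "\<And>k. k \<in> F \<Longrightarrow> f k = \<one>" "inj_on (\<lambda>k. N #> k) F"
  shows "card F \<le> card (rcosets H)"
proof -
  let ?Im = "(\<lambda>h. N #> h) ` H"
  have Im: "(\<lambda>x. N #> f x) ` carrier G = ?Im"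
    using f(2) by (simp add: image_image[symmetric])
  have "finite ?Im"
    using N(2) rcosetsI[OF subgroup.subset[OF N(1)]] subgroup.subset[OF H(1)]
    by (blast intro: finite_subset)
  moreover have "?Im \<noteq> {}"
    using subgroup.one_closed[OF H(1)] by blast
  ultimately have pos: "0 < card ?Im"
    by (simp add: card_gt_0_iff)
  have "card F * card ?Im \<le> card (rcosets N)"
    using card_mult_card_image_le[OF f(1) N F] unfolding Im .
  also have "\<dots> \<le> card ?Im * card (rcosets H)"
    by (rule card_rcosets_le_mult_index[OF N(1,2) H])
  finally show ?thesis
    using pos by (simp add: mult.commute)
qed

end

section \<open>Subgroups of bounded index in a finitely generated group\<close>

lemma mono_chain_stationary:
  fixes C :: "nat \<Rightarrow> 'b set"
  assumes mono: "mono C" and bound: "\<And>j. C j \<subseteq> A" "finite A" "card A \<le> n" and "C 0 \<noteq> {}"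
  shows "\<exists>j<n. C j = C (Suc j)"
proof (rule ccontr)
  assume "\<not> (\<exists>j<n. C j = C (Suc j))"
  have fin: "finite (C j)" for j
    using finite_subset[OF bound(1,2)] .
  have card_C: "Suc j \<le> card (C j)" if "j \<le> n" for j
    using that
  proof (induction j)
    case 0
    then show ?case
      using \<open>C 0 \<noteq> {}\<close> fin by (simp add: Suc_le_eq card_gt_0_iff)
  next
    case (Suc j)
    then have "C j \<subset> C (Suc j)"
      using monoD[OF mono, of j "Suc j"] \<open>\<not> (\<exists>j<n. C j = C (Suc j))\<close> by auto
    then have "card (C j) < card (C (Suc j))"
      by (rule psubset_card_mono[OF fin])
    then show ?case
      using Suc by simp
  qed
  have "Suc n \<le> card A"
    using card_C[of n] card_mono[OF bound(2,1), of n] by simp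
  then show False
    using bound(3) by simp
qed

lemma mono_chain_stabilises:
  fixes C :: "nat \<Rightarrow> 'b set"
  assumes mono: "mono C" and step: "\<And>i j. C i = C j \<Longrightarrow> C (Suc i) = C (Suc j)"
    and bound: "\<And>j. C j \<subseteq> A" "finite A" "card A \<le> n" and "C 0 \<noteq> {}"
  shows "C k \<subseteq> C n"
proof -
  obtain j where j: "j < n" "C j = C (Suc j)"
    using mono_chain_stationary[OF mono bound \<open>C 0 \<noteq> {}\<close>] by blast
  have stable: "C (j + d) = C j" for d
  proof (induction d)
    case (Suc d)
    then show ?case
      using step[of "j + d" j] j(2) by simp
  qed simp
  show ?thesis
  proof (cases "k \<le> n")
    case True
    then show ?thesis
      using mono by (rule monoD[rotated])
  next
    case False
    then have "C k = C j"
      using stable[of "k - j"] j(1) by simp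
    then show ?thesis
      using monoD[OF mono, of j n] j(1) by simp
  qed
qed

context group
begin

fun word_ball :: "'a set \<Rightarrow> nat \<Rightarrow> 'a set" where
  "word_ball S 0 = {\<one>}"
| "word_ball S (Suc j) =
    word_ball S j \<union> (\<lambda>(b, s). b \<otimes> s) ` (word_ball S j \<times> (S \<union> (\<lambda>s. inv s) ` S))"

lemma finite_word_ball: "finite S \<Longrightarrow> finite (word_ball S j)"
  by (induction j) auto

lemma word_ball_subset_carrier: "S \<subseteq> carrier G \<Longrightarrow> word_ball S j \<subseteq> carrier G"
  by (induction j) auto

lemma mono_word_ball: "mono (word_ball S)"
  by (rule incseq_SucI) simp

lemma one_in_word_ball: "\<one> \<in> word_ball S n"
  using monoD[OF mono_word_ball, of 0 n] by auto

lemma word_ball_Suc_mult: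
  assumes "b \<in> word_ball S j" "s \<in> S \<union> (\<lambda>s. inv s) ` S"
  shows "b \<otimes> s \<in> word_ball S (Suc j)"
proof -
  have "(\<lambda>(b, s). b \<otimes> s) (b, s) \<in> (\<lambda>(b, s). b \<otimes> s) ` (word_ball S j \<times> (S \<union> (\<lambda>s. inv s) ` S))"
    using assms by (intro imageI) simp
  then show ?thesis
    by simp
qed

lemma word_ball_mult:
  assumes S: "S \<subseteq> carrier G" and a: "a \<in> word_ball S i"
  shows "b \<in> word_ball S j \<Longrightarrow> a \<otimes> b \<in> word_ball S (i + j)"
proof (induction j arbitrary: b)
  case 0
  have "a \<in> carrier G"
    using a word_ball_subset_carrier[OF S] by blast
  with 0 a show ?case
    by simp
next
  case (Suc j)
  from Suc.prems consider "b \<in> word_ball S j"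
    | b' s where "b' \<in> word_ball S j" "s \<in> S \<union> (\<lambda>s. inv s) ` S" "b = b' \<otimes> s"
    by auto
  then show ?case
  proof cases
    case 1
    then show ?thesis
      using Suc.IH by simp
  next
    case 2
    have "a \<in> carrier G" "b' \<in> carrier G" "s \<in> carrier G"
      using a 2(1,2) S word_ball_subset_carrier[OF S] by auto
    then have "a \<otimes> b = (a \<otimes> b') \<otimes> s"
      using 2(3) by (simp add: m_assoc)
    then show ?thesis
      using word_ball_Suc_mult[OF Suc.IH[OF 2(1)] 2(2)] by simp
  qed
qed

lemma generator_in_word_ball:
  assumes "S \<subseteq> carrier G" "s \<in> S \<union> (\<lambda>s. inv s) ` S"
  shows "s \<in> word_ball S (Suc 0)"
proof -
  have "\<one> \<otimes> s \<in> word_ball S (Suc 0)"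
    using word_ball_Suc_mult[OF one_in_word_ball assms(2)] .
  moreover have "s \<in> carrier G"
    using assms by auto
  ultimately show ?thesis
    by simp
qed

lemma generate_subset_word_balls:
  assumes S: "S \<subseteq> carrier G"
  shows "generate G S \<subseteq> (\<Union>k. word_ball S k)"
proof
  fix x assume "x \<in> generate G S"
  then show "x \<in> (\<Union>k. word_ball S k)"
  proof (induction x rule: generate.induct)
    case one
    then show ?case
      using word_ball.simps(1) by blast
  next
    case (incl h)
    then show ?case
      using generator_in_word_ball[OF S] by blast
  next
    case (inv h)
    then show ?case
      using generator_in_word_ball[OF S] by blast
  next
    case (eng h1 h2)
    then show ?case
      using word_ball_mult[OF S] by blast
  qed
qed

lemma rcos_image_word_ball_Suc:
  assumes S: "S \<subseteq> carrier G" and U: "U \<subseteq> carrier G"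
  shows "(\<lambda>b. U #> b) ` word_ball S (Suc j) = (\<lambda>b. U #> b) ` word_ball S j \<union>
    (\<lambda>(c, s). c #> s) ` ((\<lambda>b. U #> b) ` word_ball S j \<times> (S \<union> (\<lambda>s. inv s) ` S))"
proof -
  let ?W = "word_ball S j" and ?A = "S \<union> (\<lambda>s. inv s) ` S"
  have "U #> (b \<otimes> s) = (U #> b) #> s" if "b \<in> ?W" "s \<in> ?A" for b s
  proof (rule coset_mult_assoc[symmetric, OF U])
    show "b \<in> carrier G" "s \<in> carrier G"
      using that S word_ball_subset_carrier[OF S] by auto
  qed
  then have "(\<lambda>b. U #> b) ` (\<lambda>(b, s). b \<otimes> s) ` (?W \<times> ?A)
      = (\<lambda>(c, s). c #> s) ` (\<lambda>(b, s). (U #> b, s)) ` (?W \<times> ?A)"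
    unfolding image_image by (intro image_cong) auto
  then show ?thesis
    using image_paired_Times[of "\<lambda>b. U #> b" "\<lambda>s. s" ?W ?A] by (simp add: image_Un)
qed

lemma rcos_eq_rcos_short_word:
  assumes S: "S \<subseteq> carrier G" and U: "subgroup U G" "finite (rcosets U)" "card (rcosets U) \<le> n"
    and x: "x \<in> word_ball S k"
  shows "\<exists>b\<in>word_ball S n. U #> x = U #> b"
proof -
  define C where "C j = (\<lambda>b. U #> b) ` word_ball S j" for j
  have "C k \<subseteq> C n"
  proof (rule mono_chain_stabilises[where A = "rcosets U"])
    show "mono C"
      unfolding C_def mono_def using monoD[OF mono_word_ball] by (simp add: image_mono)
    show "C (Suc i) = C (Suc j)" if "C i = C j" for i j
      using that rcos_image_word_ball_Suc[OF S subgroup.subset[OF U(1)]] unfolding C_def by simp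
    show "C j \<subseteq> rcosets U" for j
      unfolding C_def using word_ball_subset_carrier[OF S] rcosetsI[OF subgroup.subset[OF U(1)]]
      by blast
    show "C 0 \<noteq> {}"
      unfolding C_def by simp
  qed (use U in auto)
  then show ?thesis
    using x unfolding C_def by blast
qed

text \<open>By \<open>rcos_eq_rcos_short_word\<close>, a subgroup of index at most \<open>n\<close> is determined on
  \<open>generate G S\<close> by its intersection with this finite set (Schreier's argument).\<close>

definition word_ball_quotients :: "'a set \<Rightarrow> nat \<Rightarrow> 'a set" where
  "word_ball_quotients S n = (\<lambda>(x, y). x \<otimes> inv y) ` (word_ball S (Suc n) \<times> word_ball S n)"

lemma word_ball_congruent_short_word:
  assumes S: "S \<subseteq> carrier G" and U: "subgroup U G" "finite (rcosets U)" "card (rcosets U) \<le> n"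
    and U': "subgroup U' G" and eq: "U \<inter> word_ball_quotients S n = U' \<inter> word_ball_quotients S n"
    and z: "z \<in> word_ball S j"
  shows "\<exists>b\<in>word_ball S n. z \<otimes> inv b \<in> U \<inter> U'"
  using z
proof (induction j arbitrary: z)
  case 0
  then show ?case
    using one_in_word_ball subgroup.one_closed[OF U(1)] subgroup.one_closed[OF U']
    by (intro bexI[of _ \<one>]) simp_all
next
  case (Suc j)
  from Suc.prems consider "z \<in> word_ball S j"
    | y s where "y \<in> word_ball S j" "s \<in> S \<union> (\<lambda>s. inv s) ` S" "z = y \<otimes> s"
    by auto
  then show ?case
  proof cases
    case 1
    then show ?thesis
      using Suc.IH by blast
  next
    case 2
    obtain b where b: "b \<in> word_ball S n" "y \<otimes> inv b \<in> U \<inter> U'"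
      using Suc.IH[OF 2(1)] by blast
    have bs: "b \<otimes> s \<in> word_ball S (Suc n)"
      using word_ball_Suc_mult[OF b(1) 2(2)] .
    obtain b' where b': "b' \<in> word_ball S n" "U #> (b \<otimes> s) = U #> b'"
      using rcos_eq_rcos_short_word[OF S U bs] by blast
    have c: "y \<in> carrier G" "s \<in> carrier G" "b \<in> carrier G" "b' \<in> carrier G"
      using 2(1,2) b(1) b'(1) word_ball_subset_carrier[OF S] S by auto
    have "(b \<otimes> s) \<otimes> inv b' \<in> U"
      using b'(2) rcos_eq_iff[OF U(1)] c by simp
    moreover have "(b \<otimes> s) \<otimes> inv b' \<in> word_ball_quotients S n"
      unfolding word_ball_quotients_def using bs b'(1) by force
    ultimately have "(b \<otimes> s) \<otimes> inv b' \<in> U \<inter> U'"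
      using eq by blast
    then have "(y \<otimes> inv b) \<otimes> ((b \<otimes> s) \<otimes> inv b') \<in> U \<inter> U'"
      using b(2) subgroup.m_closed[OF subgroups_Inter_pair[OF U(1) U']] by blast
    moreover have "(y \<otimes> inv b) \<otimes> ((b \<otimes> s) \<otimes> inv b') = z \<otimes> inv b'"
      using c 2(3) by (simp add: m_assoc[symmetric]) (simp add: m_assoc)
    ultimately show ?thesis
      using b'(1) by auto
  qed
qed

lemma Int_generate_subset_if_Int_word_ball_quotients_eq:
  assumes S: "S \<subseteq> carrier G" and U: "subgroup U G" "finite (rcosets U)" "card (rcosets U) \<le> n"
    and U': "subgroup U' G" and eq: "U \<inter> word_ball_quotients S n = U' \<inter> word_ball_quotients S n"
  shows "U \<inter> generate G S \<subseteq> U'"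
proof
  fix x assume x: "x \<in> U \<inter> generate G S"
  then obtain j where "x \<in> word_ball S j"
    using generate_subset_word_balls[OF S] by blast
  then obtain b where b: "b \<in> word_ball S n" "x \<otimes> inv b \<in> U \<inter> U'"
    using word_ball_congruent_short_word[OF S U U' eq] by blast
  have c: "x \<in> carrier G" "b \<in> carrier G"
    using x b(1) word_ball_subset_carrier[OF S] subgroup.subset[OF U(1)] by auto
  have "b = inv (x \<otimes> inv b) \<otimes> x"
    using c by (simp add: inv_mult_group m_assoc)
  then have "b \<in> U"
    using b(2) x subgroup.m_closed[OF U(1)] subgroup.m_inv_closed[OF U(1)] by (metis IntD1)
  moreover have "(\<lambda>(x, y). x \<otimes> inv y) (b, \<one>) \<in> word_ball_quotients S n"
    unfolding word_ball_quotients_def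
    using b(1) one_in_word_ball monoD[OF mono_word_ball, of n "Suc n"] by (intro imageI) auto
  then have "b \<in> word_ball_quotients S n"
    using c by simp
  ultimately have "b \<in> U'"
    using eq by blast
  moreover have "x = (x \<otimes> inv b) \<otimes> b"
    using c by (simp add: m_assoc)
  ultimately show "x \<in> U'"
    using b(2) subgroup.m_closed[OF U'] by (metis IntD2)
qed

lemma finite_Int_generate_bounded_index:
  assumes S: "finite S" "S \<subseteq> carrier G"
  shows "finite ((\<lambda>U. U \<inter> generate G S) `
    {U. subgroup U G \<and> finite (rcosets U) \<and> card (rcosets U) \<le> n})"
proof (rule image_factor_finite_card_le(1))
  let ?Q = "word_ball_quotients S n"
  have "finite ?Q"
    unfolding word_ball_quotients_def
    by (intro finite_imageI finite_cartesian_product finite_word_ball S(1))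
  then have "finite (Pow ?Q)"
    by simp
  then show "finite ((\<lambda>U. U \<inter> ?Q) ` {U. subgroup U G \<and> finite (rcosets U) \<and> card (rcosets U) \<le> n})"
    by (rule finite_subset[rotated]) auto
  show "U \<inter> generate G S = U' \<inter> generate G S"
    if "U \<in> {U. subgroup U G \<and> finite (rcosets U) \<and> card (rcosets U) \<le> n}"
      "U' \<in> {U. subgroup U G \<and> finite (rcosets U) \<and> card (rcosets U) \<le> n}"
      "U \<inter> ?Q = U' \<inter> ?Q" for U U'
    using that Int_generate_subset_if_Int_word_ball_quotients_eq[OF S(2)] by blast
qed

end

section \<open>Topological groups\<close>

context group
begin

lemma conj_mem_iff:
  assumes "subgroup H G" "v \<in> H" "z \<in> carrier G"
  shows "v \<otimes> z \<otimes> inv v \<in> H \<longleftrightarrow> z \<in> H"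
proof -
  have v: "v \<in> carrier G"
    by (rule subgroup.mem_carrier[OF assms(1,2)])
  have "z = inv v \<otimes> (v \<otimes> z \<otimes> inv v) \<otimes> v"
    using v assms(3) by (simp add: m_assoc[symmetric]) (simp add: m_assoc)
  then show ?thesis
    using assms subgroup.m_closed[OF assms(1)] subgroup.m_inv_closed[OF assms(1)] by metis
qed

definition normal_core :: "'a set \<Rightarrow> 'a set" where
  "normal_core V = {y \<in> carrier G. \<forall>x\<in>carrier G. x \<otimes> y \<otimes> inv x \<in> V}"

lemma normal_core_subset: "normal_core V \<subseteq> V"
  unfolding normal_core_def by (auto dest: bspec[of _ _ \<one>])

lemma normal_core_normal:
  assumes V: "subgroup V G"
  shows "normal_core V \<lhd> G"
  unfolding normal_inv_iff
proof (intro conjI ballI)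
  show "subgroup (normal_core V) G"
  proof (rule subgroupI)
    show "normal_core V \<subseteq> carrier G"
      unfolding normal_core_def by blast
    show "normal_core V \<noteq> {}"
      using subgroup.one_closed[OF V] unfolding normal_core_def by auto
    show "inv a \<in> normal_core V" if "a \<in> normal_core V" for a
    proof -
      have "x \<otimes> inv a \<otimes> inv x = inv (x \<otimes> a \<otimes> inv x)" if "x \<in> carrier G" "a \<in> carrier G" for x
        using that by (simp add: m_assoc inv_mult_group)
      then show ?thesis
        using \<open>a \<in> normal_core V\<close> subgroup.m_inv_closed[OF V] unfolding normal_core_def by auto
    qed
    show "a \<otimes> b \<in> normal_core V" if "a \<in> normal_core V" "b \<in> normal_core V" for a b
    proof -
      have "x \<otimes> (a \<otimes> b) \<otimes> inv x = (x \<otimes> a \<otimes> inv x) \<otimes> (x \<otimes> b \<otimes> inv x)"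
        if "x \<in> carrier G" "a \<in> carrier G" "b \<in> carrier G" for x
        using that by (simp add: m_assoc) (simp add: m_assoc[symmetric])
      then show ?thesis
        using that subgroup.m_closed[OF V] unfolding normal_core_def by auto
    qed
  qed
  fix x h assume x: "x \<in> carrier G" and h: "h \<in> normal_core V"
  have "y \<otimes> (x \<otimes> h \<otimes> inv x) \<otimes> inv y = (y \<otimes> x) \<otimes> h \<otimes> inv (y \<otimes> x)"
    if "y \<in> carrier G" "h \<in> carrier G" for y
    using that x by (simp add: m_assoc inv_mult_group)
  then show "x \<otimes> h \<otimes> inv x \<in> normal_core V"
    using x h unfolding normal_core_def by auto
qed

lemma normal_Inter:
  assumes "A \<noteq> {}" "\<And>N. N \<in> A \<Longrightarrow> N \<lhd> G"
  shows "\<Inter>A \<lhd> G"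
  unfolding normal_inv_iff
proof (intro conjI ballI)
  show "subgroup (\<Inter>A) G"
    using assms normal_imp_subgroup by (intro subgroups_Inter) auto
  show "x \<otimes> h \<otimes> inv x \<in> \<Inter>A" if "x \<in> carrier G" "h \<in> \<Inter>A" for x h
  proof (rule InterI)
    fix N assume "N \<in> A"
    then show "x \<otimes> h \<otimes> inv x \<in> N"
      using normal.inv_op_closed2[OF assms(2) that(1)] that(2) by blast
  qed
qed

lemma mult_mem_generate_right_stable:
  assumes W: "W \<subseteq> carrier G" and C: "C \<subseteq> carrier G"
    and stable: "\<And>x w. x \<in> C \<Longrightarrow> w \<in> W \<Longrightarrow> x \<otimes> w \<in> C"
    and symm: "\<And>w. w \<in> W \<Longrightarrow> inv w \<in> W"
    and x: "x \<in> C" and v: "v \<in> generate G W"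
  shows "x \<otimes> v \<in> C"
  using v x
proof (induction v arbitrary: x rule: generate.induct)
  case one
  then show ?case
    using C by auto
next
  case (incl h)
  then show ?case
    using stable by blast
next
  case (inv h)
  then show ?case
    using stable symm by blast
next
  case (eng h1 h2)
  have "h1 \<in> carrier G" "h2 \<in> carrier G" "x \<in> carrier G"
    using eng.hyps eng.prems generate_in_carrier[OF W] C by auto
  then show ?case
    using eng.IH eng.prems by (simp add: m_assoc[symmetric])
qed

end

locale group_topology = group G for G :: "('a, 'b) monoid_scheme" (structure) +
  fixes T :: "'a topology"
  assumes topological_group: "topological_group G T"
begin

lemma topspace_eq [simp]: "topspace T = carrier G"
  using topological_group unfolding topological_group_def by blast

lemma continuous_map_mult: "continuous_map (prod_topology T T) T (\<lambda>(x, y). x \<otimes> y)"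
  using topological_group unfolding topological_group_def by blast

lemma continuous_map_inv: "continuous_map T T (\<lambda>x. inv x)"
  using topological_group unfolding topological_group_def by blast

lemma continuous_map_lmult: "a \<in> carrier G \<Longrightarrow> continuous_map T T (\<lambda>x. a \<otimes> x)"
  using continuous_map_compose[of T "prod_topology T T" "\<lambda>x. (a, x)", OF _ continuous_map_mult]
  by (simp add: continuous_map_pairwise o_def)

lemma continuous_map_rmult: "a \<in> carrier G \<Longrightarrow> continuous_map T T (\<lambda>x. x \<otimes> a)"
  using continuous_map_compose[of T "prod_topology T T" "\<lambda>x. (x, a)", OF _ continuous_map_mult]
  by (simp add: continuous_map_pairwise o_def)

lemma openin_r_coset:
  assumes U: "openin T U" and a: "a \<in> carrier G"
  shows "openin T (U #> a)"
proof -
  have Uc: "U \<subseteq> carrier G"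
    using openin_subset[OF U] by simp
  have "U #> a = {x \<in> topspace T. x \<otimes> inv a \<in> U}"
  proof (intro equalityI subsetI)
    fix x assume "x \<in> U #> a"
    then obtain u where "u \<in> U" "x = u \<otimes> a"
      unfolding r_coset_def by blast
    then show "x \<in> {x \<in> topspace T. x \<otimes> inv a \<in> U}"
      using Uc a by (auto simp: m_assoc)
  next
    fix x assume x: "x \<in> {x \<in> topspace T. x \<otimes> inv a \<in> U}"
    then have "x = (x \<otimes> inv a) \<otimes> a"
      using a by (simp add: m_assoc)
    then show "x \<in> U #> a"
      using x unfolding r_coset_def by blast
  qed
  then show ?thesis
    using openin_continuous_map_preimage[OF continuous_map_rmult U] a by simp
qed

lemma openin_l_coset:
  assumes U: "openin T U" and a: "a \<in> carrier G"
  shows "openin T (a <# U)"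
proof -
  have Uc: "U \<subseteq> carrier G"
    using openin_subset[OF U] by simp
  have "a <# U = {x \<in> topspace T. inv a \<otimes> x \<in> U}"
  proof (intro equalityI subsetI)
    fix x assume "x \<in> a <# U"
    then obtain u where "u \<in> U" "x = a \<otimes> u"
      unfolding l_coset_def by blast
    then show "x \<in> {x \<in> topspace T. inv a \<otimes> x \<in> U}"
      using Uc a by (auto simp: m_assoc[symmetric])
  next
    fix x assume x: "x \<in> {x \<in> topspace T. inv a \<otimes> x \<in> U}"
    then have "x = a \<otimes> (inv a \<otimes> x)"
      using a by (simp add: m_assoc[symmetric])
    then show "x \<in> a <# U"
      using x unfolding l_coset_def by blast
  qed
  then show ?thesis
    using openin_continuous_map_preimage[OF continuous_map_lmult U] a by simp
qed

lemma openin_subgroup_if_neighbourhood: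
  assumes V: "subgroup V G" and W: "openin T W" "\<one> \<in> W" "W \<subseteq> V"
  shows "openin T V"
proof -
  have "V = (\<Union>v\<in>V. v <# W)"
  proof (intro equalityI subsetI)
    fix v assume "v \<in> V"
    moreover have "v \<otimes> \<one> = v"
      using \<open>v \<in> V\<close> subgroup.mem_carrier[OF V] by simp
    ultimately show "v \<in> (\<Union>v\<in>V. v <# W)"
      using W(2) unfolding l_coset_def by force
  next
    fix y assume "y \<in> (\<Union>v\<in>V. v <# W)"
    then obtain v w where "v \<in> V" "w \<in> W" "y = v \<otimes> w"
      unfolding l_coset_def by blast
    then show "y \<in> V"
      using W(3) subgroup.m_closed[OF V] by blast
  qed
  moreover have "openin T (\<Union>v\<in>V. v <# W)"
    using openin_l_coset[OF W(1)] subgroup.mem_carrier[OF V] by blast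
  ultimately show ?thesis
    by simp
qed

lemma closedin_open_subgroup:
  assumes U: "subgroup U G" "openin T U"
  shows "closedin T U"
proof -
  have "carrier G - U = (\<Union>r\<in>carrier G - U. U #> r)"
  proof (intro equalityI subsetI)
    fix x assume "x \<in> carrier G - U"
    then show "x \<in> (\<Union>r\<in>carrier G - U. U #> r)"
      using rcos_self[OF _ U(1)] by blast
  next
    fix x assume "x \<in> (\<Union>r\<in>carrier G - U. U #> r)"
    then obtain r where r: "r \<in> carrier G" "r \<notin> U" "x \<in> U #> r"
      by blast
    then have "U #> r = U #> x" "x \<in> carrier G"
      using repr_independence[OF r(3,1) U(1)] r_coset_subset_G[OF subgroup.subset[OF U(1)] r(1)]
      by auto
    then show "x \<in> carrier G - U"
      using r(2) rcos_eq_iff[OF U(1) r(1)] subgroup.rcos_const[OF U(1) is_group] coset_join2[OF _ U(1)]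
      by (metis Diff_iff rcos_self[OF r(1) U(1)])
  qed
  moreover have "openin T (\<Union>r\<in>carrier G - U. U #> r)"
    using openin_r_coset[OF U(2)] by blast
  ultimately show ?thesis
    unfolding closedin_def using openin_subset[OF U(2)] by simp
qed

lemma closure_of_open_subgroup_Int_dense:
  assumes U: "subgroup U G" "openin T U" and D: "T closure_of D = carrier G"
  shows "T closure_of (U \<inter> D) = U"
proof
  show "U \<subseteq> T closure_of (U \<inter> D)"
    using openin_Int_closure_of_subset[OF U(2), of D] D subgroup.subset[OF U(1)] by auto
  have "T closure_of (U \<inter> D) \<subseteq> T closure_of U"
    by (rule closure_of_mono) blast
  then show "T closure_of (U \<inter> D) \<subseteq> U"
    using closure_of_closedin[OF closedin_open_subgroup[OF U]] by simp
qed

lemma finite_open_subgroups_bounded_index: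
  assumes "topologically_fg G T"
  shows "finite {U. subgroup U G \<and> openin T U \<and> finite (rcosets U) \<and> card (rcosets U) \<le> n}"
    (is "finite ?X")
proof -
  obtain S where S: "finite S" "S \<subseteq> carrier G" "T closure_of generate G S = carrier G"
    using assms unfolding topologically_fg_def by blast
  have "inj_on (\<lambda>U. U \<inter> generate G S) ?X"
    using closure_of_open_subgroup_Int_dense[OF _ _ S(3)] by (intro inj_onI) (metis mem_Collect_eq)
  moreover have "finite ((\<lambda>U. U \<inter> generate G S) ` ?X)"
    by (rule finite_subset[OF _ finite_Int_generate_bounded_index[OF S(1,2), of n]]) blast
  ultimately show ?thesis
    using finite_imageD by blast
qed

lemma openin_normal_core:
  assumes V: "subgroup V G" "openin T V" "finite (rcosets V)"
  shows "openin T (normal_core V)"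
proof -
  define conj where "conj x = {y \<in> topspace T. x \<otimes> y \<otimes> inv x \<in> V}" for x
  have open_conj: "openin T (conj x)" if "x \<in> carrier G" for x
  proof -
    have "continuous_map T T (\<lambda>y. x \<otimes> y \<otimes> inv x)"
      using continuous_map_compose[OF continuous_map_lmult[OF that] continuous_map_rmult[of "inv x"]]
        that by (simp add: o_def)
    then show ?thesis
      unfolding conj_def using openin_continuous_map_preimage V(2) by blast
  qed
  have fibres: "conj x = conj x'" if "x \<in> carrier G" "x' \<in> carrier G" "V #> x = V #> x'" for x x'
  proof -
    have v: "x' \<otimes> inv x \<in> V"
      using that rcos_eq_iff[OF V(1) that(2,1)] by simp
    have "x' \<otimes> y \<otimes> inv x' \<in> V \<longleftrightarrow> x \<otimes> y \<otimes> inv x \<in> V" if "y \<in> carrier G" for y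
    proof -
      have "x' \<otimes> y \<otimes> inv x' = (x' \<otimes> inv x) \<otimes> (x \<otimes> y \<otimes> inv x) \<otimes> inv (x' \<otimes> inv x)"
        using that \<open>x \<in> carrier G\<close> \<open>x' \<in> carrier G\<close>
        by (simp add: m_assoc inv_mult_group) (simp add: m_assoc[symmetric])
      then show ?thesis
        using conj_mem_iff[OF V(1) v, of "x \<otimes> y \<otimes> inv x"] that \<open>x \<in> carrier G\<close> by simp
    qed
    then show ?thesis
      unfolding conj_def by auto
  qed
  have "finite ((\<lambda>x. V #> x) ` carrier G)"
    using V(3) by (simp add: rcosets_eq_image)
  then have "finite (conj ` carrier G)"
    using fibres by (rule image_factor_finite_card_le(1))
  moreover have "normal_core V = \<Inter> (insert (carrier G) (conj ` carrier G))"
    unfolding normal_core_def conj_def by auto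
  moreover have "openin T (\<Inter> (insert (carrier G) (conj ` carrier G)))"
    by (rule openin_Inter) (use \<open>finite (conj ` carrier G)\<close> open_conj openin_topspace[of T] in auto)
  ultimately show ?thesis
    by simp
qed

end

section \<open>Compact and profinite groups\<close>

locale compact_group_topology = group_topology +
  assumes compact_space: "compact_space T"
begin

lemma finite_rcosets_open_subgroup:
  assumes U: "subgroup U G" "openin T U"
  shows "finite (rcosets U)"
proof -
  have "\<forall>c\<in>rcosets U. openin T c"
    using openin_r_coset[OF U(2)] unfolding rcosets_eq_image by blast
  moreover have "topspace T \<subseteq> \<Union> (rcosets U)"
    using rcos_self[OF _ U(1)] rcosetsI[OF subgroup.subset[OF U(1)]] by auto
  ultimately obtain F where F: "finite F" "F \<subseteq> rcosets U" "topspace T \<subseteq> \<Union> F"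
    using compact_space unfolding compact_space_def compactin_def by meson
  have "rcosets U \<subseteq> F"
  proof
    fix c assume c: "c \<in> rcosets U"
    then obtain x where x: "x \<in> c"
      using subgroup.rcosets_non_empty[OF U(1) c] by blast
    then obtain c' where c': "c' \<in> F" "x \<in> c'"
      using F(3) c rcosets_part_G[OF U(1)] by auto
    have "c = c'"
    proof (rule ccontr)
      assume "c \<noteq> c'"
      then have "disjnt c c'"
        using pairwiseD[OF rcos_disjoint[OF U(1)] c] c'(1) F(2) by blast
      then show False
        using x c'(2) by (simp add: disjnt_iff)
    qed
    then show "c \<in> F"
      using c'(1) by simp
  qed
  then show ?thesis
    using F(1) finite_subset by blast
qed

lemma exists_symmetric_neighbourhood_mult_stable:
  assumes C: "closedin T C" "openin T C"
  obtains W where "openin T W" "\<one> \<in> W" "\<And>x w. x \<in> C \<Longrightarrow> w \<in> W \<Longrightarrow> x \<otimes> w \<in> C"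
    "\<And>w. w \<in> W \<Longrightarrow> inv w \<in> W"
proof -
  let ?M = "{p \<in> topspace (prod_topology T T). (\<lambda>(x, y). x \<otimes> y) p \<in> C}"
  have M: "openin (prod_topology T T) ?M"
    using openin_continuous_map_preimage[OF continuous_map_mult C(2)] .
  have "C \<times> {\<one>} \<subseteq> ?M"
    using openin_subset[OF C(2)] by auto
  then obtain U0 W0 where U0W0: "openin T W0" "C \<subseteq> U0" "\<one> \<in> W0" "U0 \<times> W0 \<subseteq> ?M"
    using tube_lemma_left[OF M closedin_compact_space[OF compact_space C(1)], of \<one>] by auto
  define W where "W = W0 \<inter> {w \<in> topspace T. inv w \<in> W0}"
  show ?thesis
  proof
    show "openin T W"
      unfolding W_def
      using openin_continuous_map_preimage[OF continuous_map_inv U0W0(1)] U0W0(1) by auto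
    show "\<one> \<in> W"
      unfolding W_def using U0W0(3) by simp
    show "x \<otimes> w \<in> C" if "x \<in> C" "w \<in> W" for x w
    proof -
      have "(x, w) \<in> U0 \<times> W0"
        using that U0W0(2) unfolding W_def by blast
      then show ?thesis
        using U0W0(4) by auto
    qed
    show "inv w \<in> W" if "w \<in> W" for w
      using that openin_subset[OF U0W0(1)] unfolding W_def by auto
  qed
qed

lemma open_subgroup_subset_clopen:
  assumes C: "closedin T C" "openin T C" "\<one> \<in> C"
  obtains V where "subgroup V G" "openin T V" "V \<subseteq> C"
proof -
  obtain W where W: "openin T W" "\<one> \<in> W" "\<And>x w. x \<in> C \<Longrightarrow> w \<in> W \<Longrightarrow> x \<otimes> w \<in> C"
    "\<And>w. w \<in> W \<Longrightarrow> inv w \<in> W"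
    using exists_symmetric_neighbourhood_mult_stable[OF C(1,2)] by blast
  have Wc: "W \<subseteq> carrier G" and Cc: "C \<subseteq> carrier G"
    using openin_subset[OF W(1)] openin_subset[OF C(2)] by simp_all
  have V: "subgroup (generate G W) G"
    using generate_is_subgroup[OF Wc] .
  have "generate G W \<subseteq> C"
  proof
    fix v assume "v \<in> generate G W"
    then have "\<one> \<otimes> v \<in> C"
      using mult_mem_generate_right_stable[OF Wc Cc W(3,4) C(3)] by simp
    then show "v \<in> C"
      using generate_in_carrier[OF Wc \<open>v \<in> generate G W\<close>] by simp
  qed
  moreover have "openin T (generate G W)"
    using openin_subgroup_if_neighbourhood[OF V W(1,2)] generate.incl[of _ W G] by blast
  ultimately show ?thesis
    using V that by blast
qed

text \<open>Open subgroups of a compact group have finite index, so \<open>card\<close> below never takes its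
  junk value \<open>0\<close> on an infinite set of cosets.\<close>

definition open_normal_index_le :: "nat \<Rightarrow> 'a set set" where
  "open_normal_index_le n = {U. U \<lhd> G \<and> openin T U \<and> card (rcosets U) \<le> n}"

lemma finite_open_normal_index_le:
  assumes "topologically_fg G T"
  shows "finite (open_normal_index_le n)"
proof (rule finite_subset[OF _ finite_open_subgroups_bounded_index[OF assms, of n]])
  show "open_normal_index_le n
    \<subseteq> {U. subgroup U G \<and> openin T U \<and> finite (rcosets U) \<and> card (rcosets U) \<le> n}"
    unfolding open_normal_index_le_def
    using normal_imp_subgroup finite_rcosets_open_subgroup by blast
qed

lemma vimage_mem_open_normal_index_le:
  assumes f: "group_hom G G f" "continuous_map T T f" and U: "U \<in> open_normal_index_le n"
  shows "{x \<in> carrier G. f x \<in> U} \<in> open_normal_index_le n"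
proof -
  have U: "U \<lhd> G" "openin T U" "card (rcosets U) \<le> n"
    using U unfolding open_normal_index_le_def by auto
  have sub: "subgroup U G"
    using normal_imp_subgroup[OF U(1)] .
  have fc: "f x \<in> carrier G" if "x \<in> carrier G" for x
    by (rule group_hom.hom_closed[OF f(1) that])
  have "{x \<in> carrier G. f x \<in> U} \<lhd> G"
    unfolding normal_inv_iff
  proof (intro conjI ballI subgroup_vimage[OF f(1) sub])
    fix x h assume x: "x \<in> carrier G" and h: "h \<in> {x \<in> carrier G. f x \<in> U}"
    then have "f (x \<otimes> h \<otimes> inv x) = f x \<otimes> f h \<otimes> inv (f x)"
      by (simp add: group_hom.hom_mult[OF f(1)] group_hom.hom_inv[OF f(1)])
    then show "x \<otimes> h \<otimes> inv x \<in> {x \<in> carrier G. f x \<in> U}"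
      using x h normal.inv_op_closed2[OF U(1) fc[OF x]] by simp
  qed
  moreover have "openin T {x \<in> carrier G. f x \<in> U}"
    using openin_continuous_map_preimage[OF f(2) U(2)] by simp
  moreover have "card (rcosets {x \<in> carrier G. f x \<in> U}) \<le> n"
    using card_rcosets_vimage_le(2)[OF f(1) sub finite_rcosets_open_subgroup[OF sub U(2)]] U(3)
    by linarith
  ultimately show ?thesis
    unfolding open_normal_index_le_def by blast
qed

lemma exists_invariant_open_normal_subgroup:
  assumes "topologically_fg G T" and f: "group_hom G G f" "continuous_map T T f"
  obtains N where "N \<lhd> G" "openin T N" "f ` N \<subseteq> N" "\<And>U. U \<in> open_normal_index_le n \<Longrightarrow> N \<subseteq> U"
proof
  let ?X = "insert (carrier G) (open_normal_index_le n)"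
  have X: "U \<lhd> G" "openin T U" if "U \<in> ?X" for U
    using that normal_inv_iff[of "carrier G"] subgroup_self openin_topspace[of T]
    unfolding open_normal_index_le_def by auto
  show "\<Inter>?X \<lhd> G"
    using X(1) by (intro normal_Inter) auto
  show "openin T (\<Inter>?X)"
    using X(2) finite_open_normal_index_le[OF assms(1)] by (intro openin_Inter) auto
  show "f ` \<Inter>?X \<subseteq> \<Inter>?X"
  proof clarify
    fix x U assume x: "x \<in> \<Inter>?X" and U: "U \<in> ?X"
    then have xc: "x \<in> carrier G"
      by blast
    show "f x \<in> U"
    proof (cases "U = carrier G")
      case True
      then show ?thesis
        using group_hom.hom_closed[OF f(1) xc] by simp
    next
      case False
      then have "{x \<in> carrier G. f x \<in> U} \<in> ?X"
        using U vimage_mem_open_normal_index_le[OF f] by blast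
      then show ?thesis
        using x by blast
    qed
  qed
  show "\<Inter>?X \<subseteq> U" if "U \<in> open_normal_index_le n" for U
    using that by blast
qed

end

locale profinite_group_topology = compact_group_topology +
  assumes Hausdorff_space: "Hausdorff_space T"
    and totally_disconnected_space: "totally_disconnected_space T"
begin

lemma exists_clopen_separating_one:
  assumes g: "g \<in> carrier G" "g \<noteq> \<one>"
  obtains C where "closedin T C" "openin T C" "\<one> \<in> C" "g \<notin> C"
proof -
  have "quasi_component_of T \<one> = connected_component_of T \<one>"
    by (rule quasi_eq_connected_component_of) (simp add: compact_space Hausdorff_space)
  moreover have "connected_component_of_set T \<one> = {\<one>}"
    using totally_disconnected_space unfolding totally_disconnected_space_def by simp
  ultimately have "\<not> quasi_component_of T \<one> g"
    using g(2) by (metis mem_Collect_eq singletonD)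
  then obtain C where C: "closedin T C" "openin T C" "(\<one> \<in> C) \<noteq> (g \<in> C)"
    unfolding quasi_component_of_def using g(1) by auto
  show ?thesis
  proof (cases "\<one> \<in> C")
    case True
    then show ?thesis
      using C that by blast
  next
    case False
    have "closedin T (topspace T - C)" "openin T (topspace T - C)"
      using closedin_diff[OF closedin_topspace C(2)] openin_diff[OF openin_topspace C(1)] .
    then show ?thesis
      using False C(3) g(1) that[of "topspace T - C"] by simp
  qed
qed

lemma exists_open_normal_subgroup_not_mem:
  assumes g: "g \<in> carrier G" "g \<noteq> \<one>"
  obtains N where "N \<lhd> G" "openin T N" "g \<notin> N"
proof -
  obtain C where C: "closedin T C" "openin T C" "\<one> \<in> C" "g \<notin> C"
    using exists_clopen_separating_one[OF g] .
  obtain V where V: "subgroup V G" "openin T V" "V \<subseteq> C"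
    using open_subgroup_subset_clopen[OF C(1-3)] .
  have "normal_core V \<lhd> G" "openin T (normal_core V)" "g \<notin> normal_core V"
    using normal_core_normal[OF V(1)] openin_normal_core[OF V(1,2) finite_rcosets_open_subgroup[OF V(1,2)]]
      normal_core_subset[of V] V(3) C(4) by auto
  then show ?thesis
    using that by blast
qed

lemma exists_index_bound_avoiding:
  assumes "finite D" "D \<subseteq> carrier G - {\<one>}"
  obtains n where "\<And>d. d \<in> D \<Longrightarrow> \<exists>U\<in>open_normal_index_le n. d \<notin> U"
proof -
  have "\<forall>d\<in>D. \<exists>U. U \<lhd> G \<and> openin T U \<and> d \<notin> U"
    using assms(2) exists_open_normal_subgroup_not_mem by (metis Diff_iff insertI1 subsetD)
  then obtain U where U: "\<And>d. d \<in> D \<Longrightarrow> U d \<lhd> G \<and> openin T (U d) \<and> d \<notin> U d"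
    by metis
  define n where "n = (\<Sum>d\<in>D. card (rcosets (U d)))"
  have "U d \<in> open_normal_index_le n" if "d \<in> D" for d
    using U[OF that] member_le_sum[OF that, of "\<lambda>d. card (rcosets (U d))"] assms(1)
    unfolding open_normal_index_le_def n_def by simp
  then show ?thesis
    using U that by blast
qed

lemma exists_invariant_open_normal_separating:
  assumes fg: "topologically_fg G T" and f: "group_hom G G f" "continuous_map T T f"
    and F: "finite F" "F \<subseteq> carrier G"
  obtains N where "N \<lhd> G" "openin T N" "f ` N \<subseteq> N" "inj_on (\<lambda>x. N #> x) F"
proof -
  define D where "D = {x \<otimes> inv y | x y. x \<in> F \<and> y \<in> F \<and> x \<noteq> y}"
  have "finite ((\<lambda>(x, y). x \<otimes> inv y) ` (F \<times> F))"
    using F(1) by simp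
  then have "finite D"
    unfolding D_def by (rule finite_subset[rotated]) auto
  moreover have "D \<subseteq> carrier G - {\<one>}"
    unfolding D_def using F(2) inv_equality[of _ "inv _"] by fastforce
  ultimately obtain n where n: "\<And>d. d \<in> D \<Longrightarrow> \<exists>U\<in>open_normal_index_le n. d \<notin> U"
    using exists_index_bound_avoiding by blast
  obtain N where N: "N \<lhd> G" "openin T N" "f ` N \<subseteq> N"
    and NU: "\<And>U. U \<in> open_normal_index_le n \<Longrightarrow> N \<subseteq> U"
    using exists_invariant_open_normal_subgroup[OF fg f] by blast
  have "inj_on (\<lambda>x. N #> x) F"
  proof (rule inj_onI, rule ccontr)
    fix x y assume "x \<in> F" "y \<in> F" "N #> x = N #> y" "x \<noteq> y"
    moreover from this have "x \<otimes> inv y \<in> N"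
      using rcos_eq_iff[OF normal_imp_subgroup[OF N(1)]] F(2) by blast
    ultimately show False
      using n NU unfolding D_def by blast
  qed
  then show ?thesis
    using N that by blast
qed

lemma finite_kernel_if_image_finite_index:
  assumes fg: "topologically_fg G T" and f: "group_hom G G f" "continuous_map T T f"
    and H: "subgroup H G" "finite (rcosets H)" "f ` carrier G = H"
  shows "finite {x \<in> carrier G. f x = \<one>}"
proof (rule ccontr)
  assume "infinite {x \<in> carrier G. f x = \<one>}"
  then obtain F where F: "finite F" "card F = Suc (card (rcosets H))" "F \<subseteq> {x \<in> carrier G. f x = \<one>}"
    using infinite_arbitrarily_large by blast
  obtain N where N: "N \<lhd> G" "openin T N" "f ` N \<subseteq> N" "inj_on (\<lambda>x. N #> x) F"
    using exists_invariant_open_normal_separating[OF fg f F(1)] F(3) by blast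
  have "card F \<le> card (rcosets H)"
  proof (rule card_le_index_of_kernel_subset[OF f(1) H(3,1,2)])
    show "subgroup N G" "finite (rcosets N)"
      using normal_imp_subgroup[OF N(1)] finite_rcosets_open_subgroup N(2) by auto
  qed (use F(3) N(3,4) in auto)
  then show False
    using F(2) by simp
qed

end

lemma profinite_group_topologyI:
  assumes "profinite_group G T"
  shows "profinite_group_topology G T"
  using assms unfolding profinite_group_def
  by (intro profinite_group_topology.intro compact_group_topology.intro group_topology.intro
      compact_group_topology_axioms.intro profinite_group_topology_axioms.intro group_topology_axioms.intro)
    (auto simp: topological_group_def)

theorem proposition3p2:
  fixes G :: "('a, 'm) monoid_scheme" and T :: "'a topology"
    and H :: "'a set" and \<alpha> :: "'a \<Rightarrow> 'a"
  assumes "profinite_group G T"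
    and "topologically_fg G T"
    and "subgroup H G"
    and "finite (rcosets\<^bsub>G\<^esub> H)"
    and "\<alpha> \<in> hom G (G\<lparr>carrier := H\<rparr>)"
    and "continuous_map T (subtopology T H) \<alpha>"
    and "\<alpha> ` carrier G = H"
  shows "finite (kernel G (G\<lparr>carrier := H\<rparr>) \<alpha>)
    \<and> ((\<forall>N. N \<lhd> G \<and> finite N \<longrightarrow> N = {\<one>\<^bsub>G\<^esub>}) \<longrightarrow> inj_on \<alpha> (carrier G))"
proof -
  interpret profinite_group_topology G T
    using profinite_group_topologyI[OF assms(1)] .
  have hom: "group_hom G G \<alpha>"
    using assms(5) subgroup.subset[OF assms(3)]
    by (intro group_hom.intro group_hom_axioms.intro is_group) (auto simp: hom_def)
  have kernel: "kernel G (G\<lparr>carrier := H\<rparr>) \<alpha> = kernel G G \<alpha>"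
    by (simp add: kernel_def)
  have "finite (kernel G G \<alpha>)"
    using finite_kernel_if_image_finite_index[OF assms(2) hom
        continuous_map_into_fulltopology[OF assms(6)] assms(3,4,7)]
    by (simp add: kernel_def)
  moreover have "inj_on \<alpha> (carrier G)" if "\<forall>N. N \<lhd> G \<and> finite N \<longrightarrow> N = {\<one>\<^bsub>G\<^esub>}"
    using that group_hom.normal_kernel[OF hom] \<open>finite (kernel G G \<alpha>)\<close>
      group_hom.inj_iff_trivial_ker[OF hom] by blast
  ultimately show ?thesis
    unfolding kernel by blast
qed

end
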